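(* A function $f \in L^1(\mathbb{R})$ satisfies $f_{k_0}\in L^\infty(\mathbb{R})$ for some $k_0\in\mathbb{N}$ if and only if its Fourier transform $\widehat f$ belongs to $L^p(\mathbb{R})$ for some $p \in [1,\infty)$.
   Context: For $f\in L^1(\mathbb{R})$, $f_1 := f$ and $f_{k+1} := f_k * f$, i.e. $f_{k+1}(x)=\int_\mathbb{R} f_k(x-y)f(y)\,\mathrm{d}y$. The Fourier transform is $\widehat f(\theta) := \int_\mathbb{R} e^{i\theta x} f(x)\,\mathrm{d}x$. *)

theory Defs
  imports "HOL-Analysis.Analysis"
begin

definition conv :: "(real \<Rightarrow> complex) \<Rightarrow> (real \<Rightarrow> complex) \<Rightarrow> real \<Rightarrow> complex" where
  "conv g h x = (LINT y|lborel. g (x - y) * h y)"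

text \<open>Convolution powers: conv_pow f k is f_k for k \<ge> 1 (f_1 = f, f_(k+1) = f_k * f).
  The value at k = 0 is a dummy (set to f) and never used.\<close>
fun conv_pow :: "(real \<Rightarrow> complex) \<Rightarrow> nat \<Rightarrow> real \<Rightarrow> complex" where
  "conv_pow f 0 = f"
| "conv_pow f (Suc 0) = f"
| "conv_pow f (Suc (Suc k)) = conv (conv_pow f (Suc k)) f"

definition fourier :: "(real \<Rightarrow> complex) \<Rightarrow> real \<Rightarrow> complex" where
  "fourier f \<theta> = (LINT x|lborel. exp (\<i> * complex_of_real (\<theta> * x)) * f x)"

definition in_Linf :: "(real \<Rightarrow> complex) \<Rightarrow> bool" where
  "in_Linf g \<longleftrightarrow> g \<in> borel_measurable lborel \<and> (\<exists>C. AE x in lborel. norm (g x) \<le> C)"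

definition in_Lp :: "real \<Rightarrow> (real \<Rightarrow> complex) \<Rightarrow> bool" where
  "in_Lp p g \<longleftrightarrow> g \<in> borel_measurable lborel \<and> integrable lborel (\<lambda>x. norm (g x) powr p)"

end

theory Submission
  imports Defs "HOL-Probability.Probability"
begin

(* Both directions rest on two facts about g \<in> L^1, proved by Gauss-Weierstrass smoothing.
   With \<phi> the standard normal density and G_s(z) = e^{-(z/s)^2/2}/s, the multiplication
   formula  \<integral> g^(\<theta>) e^{-i\<theta>x} \<phi>(s\<theta>) d\<theta> = \<integral> g(y) G_s(y - x) dy  moves information between g and g^:
   (A) if g^ \<in> L^1, then |g| \<le> \<parallel>g^\<parallel>_1 / sqrt(2\<pi>) a.e.: the smoothings of g are bounded by
       \<parallel>g^\<parallel>_1, hence so are the interval averages of g (s \<rightarrow> 0), hence so is g at its Lebesgue points;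
   (B) if g \<in> L^\<infinity>, then |g^|^2 \<in> L^1: pairing g with its smoothing bounds \<integral> |g^|^2 \<phi>(s\<theta>) d\<theta>
       uniformly in s, and Fatou's lemma lets s \<rightarrow> 0.
   The file develops the Gauss kernel, the convolution theorem (f_k)^ = (f^)^k, the smoothing,
   then (A) and (B), and finally the theorem: f_k \<in> L^\<infinity> gives f^ \<in> L^{2k} by (B); conversely
   f^ \<in> L^p and |f^| \<le> \<parallel>f\<parallel>_1 give (f_k)^ \<in> L^1 for k = \<lceil>p\<rceil>, so f_k \<in> L^\<infinity> by (A). *)


section \<open>The Gauss kernel\<close>

definition gauss_kernel :: "real \<Rightarrow> real \<Rightarrow> real" where
  "gauss_kernel s z = exp (-((z/s)^2)/2) / s"

lemma gauss_kernel_measurable [measurable]: "gauss_kernel s \<in> borel_measurable borel"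
  unfolding gauss_kernel_def by measurable

lemma gauss_kernel_pos: "s > 0 \<Longrightarrow> gauss_kernel s z > 0"
  by (simp add: gauss_kernel_def)

lemma gauss_kernel_le: "s > 0 \<Longrightarrow> gauss_kernel s z \<le> 1/s"
  by (simp add: gauss_kernel_def divide_right_mono)

lemma gauss_kernel_eq_normal_density:
  "s > 0 \<Longrightarrow> gauss_kernel s (y - x) = sqrt (2*pi) * normal_density x s y"
  by (simp add: gauss_kernel_def normal_density_def power_divide real_sqrt_mult field_simps)

lemma integrable_gauss_kernel: "s > 0 \<Longrightarrow> integrable lborel (\<lambda>y. gauss_kernel s (y - x))"
  by (simp add: gauss_kernel_eq_normal_density)

lemma integral_gauss_kernel: "s > 0 \<Longrightarrow> (LINT y|lborel. gauss_kernel s (y - x)) = sqrt (2*pi)"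
  using integral_normal_density[of s x] by (simp add: gauss_kernel_eq_normal_density)

lemma gaussian_integral:
  shows "integrable lborel (\<lambda>t. exp (-(t^2)/2::real))"
    and "(LINT t|lborel. exp (-(t^2)/2::real)) = sqrt (2*pi)"
  using integrable_gauss_kernel[of 1 0] integral_gauss_kernel[of 1 0]
  by (simp_all add: gauss_kernel_def)

lemma std_normal_density_le_1: "std_normal_density x \<le> 1"
proof -
  have "exp (- x\<^sup>2 / 2) \<le> 1" by simp
  moreover have "1 \<le> sqrt (2*pi)" using pi_gt3 by simp
  ultimately have "exp (- x\<^sup>2 / 2) \<le> sqrt (2*pi)" by linarith
  then show ?thesis unfolding std_normal_density_def by simp
qed

lemma integrable_std_normal_density_scaled:
  "s > 0 \<Longrightarrow> integrable lborel (\<lambda>\<theta>. std_normal_density (s * \<theta>))"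
  using lborel_integrable_real_affine[of "std_normal_density" s 0] by simp

text \<open>The Fourier transform of \<theta> \<mapsto> \<phi>(s\<theta>) is G_s; for s = 1 this is the characteristic
  function of the standard normal distribution.\<close>
lemma fourier_std_normal_density_scaled:
  assumes s: "s > 0"
  shows "(LINT \<theta>|lborel. iexp (\<theta> * z) * complex_of_real (std_normal_density (s * \<theta>)))
       = complex_of_real (gauss_kernel s z)"
proof -
  have char: "(LINT x|lborel. std_normal_density x *\<^sub>R iexp (t * x))
      = complex_of_real (exp (-(t^2)/2))" for t
  proof -
    have "char std_normal_distribution t = complex_of_real (exp (-(t^2)/2))"
      by (simp add: char_std_normal_distribution)
    then show ?thesis unfolding char_def
      by (subst (asm) integral_density) auto
  qed
  have "(LINT \<theta>|lborel. iexp (\<theta> * z) * complex_of_real (std_normal_density (s * \<theta>)))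
     = \<bar>1/s\<bar> *\<^sub>R (LINT x|lborel. iexp ((0 + 1/s * x) * z)
                                    * complex_of_real (std_normal_density (s * (0 + 1/s*x))))"
    using s by (intro lborel_integral_real_affine) auto
  also have "\<dots> = (1/s) *\<^sub>R (LINT x|lborel. std_normal_density x *\<^sub>R iexp ((z/s) * x))"
    using s by (intro arg_cong2[where f="(*\<^sub>R)"] Bochner_Integration.integral_cong)
      (auto simp: scaleR_conv_of_real mult.commute)
  also have "\<dots> = (1/s) *\<^sub>R complex_of_real (exp (-((z/s)^2)/2))"
    by (simp only: char)
  also have "\<dots> = complex_of_real (gauss_kernel s z)"
    by (simp add: gauss_kernel_def scaleR_conv_of_real)
  finally show ?thesis .
qed


lemma integrable_product_bound:
  fixes F :: "real \<times> real \<Rightarrow> 'a::{banach, second_countable_topology}"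
  assumes F[measurable]: "F \<in> borel_measurable (lborel \<Otimes>\<^sub>M lborel)"
    and a: "integrable lborel a" and b: "integrable lborel b"
    and bound: "\<And>x y. norm (F (x, y)) \<le> a x * b y"
  shows "integrable (lborel \<Otimes>\<^sub>M lborel) F"
proof -
  have [measurable]: "a \<in> borel_measurable lborel" "b \<in> borel_measurable lborel"
    using a b by auto
  have "integrable (lborel \<Otimes>\<^sub>M lborel) (\<lambda>(x,y). a x * b y)"
  proof (rule lborel_pair.Fubini_integrable)
    have "(\<lambda>x. LINT y|lborel. norm (case (x, y) of (x, y) \<Rightarrow> a x * b y))
        = (\<lambda>x. \<bar>a x\<bar> * (LINT y|lborel. \<bar>b y\<bar>))"
      by (simp add: abs_mult)
    then show "integrable lborel (\<lambda>x. LINT y|lborel. norm (case (x, y) of (x, y) \<Rightarrow> a x * b y))"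
      using integrable_mult_left[OF integrable_abs[OF a]] by simp
    show "AE x in lborel. integrable lborel (\<lambda>y. case (x, y) of (x, y) \<Rightarrow> a x * b y)"
      using b by simp
  qed measurable
  then show ?thesis
    by (rule Bochner_Integration.integrable_bound[OF _ F]) (auto intro!: AE_I2 order_trans[OF bound])
qed

lemma borel_measurable_cnj [measurable]:
  fixes f :: "'a \<Rightarrow> complex"
  shows "f \<in> borel_measurable M \<Longrightarrow> (\<lambda>x. cnj (f x)) \<in> borel_measurable M"
  by (rule borel_measurable_continuous_on[where f=cnj]) (auto intro: continuous_on_cnj continuous_on_id)

lemma integrable_translate:
  fixes g :: "real \<Rightarrow> 'a::{banach, second_countable_topology}"
  shows "integrable lborel g \<Longrightarrow> integrable lborel (\<lambda>x. g (x - y))"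
  using lborel_integrable_real_affine[of g 1 "-y"] by simp

lemma integral_translate:
  fixes g :: "real \<Rightarrow> 'a::{banach, second_countable_topology}"
  shows "(LINT x|lborel. g (x - y)) = (LINT x|lborel. g x)"
  using lborel_integral_real_affine[of 1 g "-y"] by simp


section \<open>The Fourier transform and convolution\<close>

lemma fourier_measurable [measurable]:
  assumes [measurable]: "g \<in> borel_measurable lborel"
  shows "fourier g \<in> borel_measurable lborel"
  unfolding fourier_def[abs_def] by measurable

lemma norm_fourier_le:
  assumes "integrable lborel g"
  shows "norm (fourier g \<theta>) \<le> (LINT x|lborel. norm (g x))"
  unfolding fourier_def
  by (rule order_trans[OF integral_norm_bound]) (simp add: norm_mult)

lemma integrable_conv_integrand:
  fixes g h :: "real \<Rightarrow> complex"
  assumes g: "integrable lborel g" and h: "integrable lborel h"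
  shows "integrable (lborel \<Otimes>\<^sub>M lborel) (\<lambda>(x,y). g (x - y) * h y)"
proof -
  have [measurable]: "g \<in> borel_measurable lborel" "h \<in> borel_measurable lborel" using g h by auto
  have "integrable (lborel \<Otimes>\<^sub>M lborel) (\<lambda>(y,x). g (x - y) * h y)"
  proof (rule lborel_pair.Fubini_integrable)
    have "(LINT x|lborel. norm (case (y, x) of (y, x) \<Rightarrow> g (x - y) * h y))
        = norm (h y) * (LINT x|lborel. norm (g x))" for y
      using integral_translate[of "\<lambda>x. norm (g x)" y] by (simp add: norm_mult)
    then show "integrable lborel (\<lambda>y. LINT x|lborel. norm (case (y, x) of (y, x) \<Rightarrow> g (x - y) * h y))"
      using h by simp
    show "AE y in lborel. integrable lborel (\<lambda>x. case (y, x) of (y, x) \<Rightarrow> g (x - y) * h y)"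
      using integrable_translate[OF g] by simp
  qed measurable
  from lborel_pair.integrable_product_swap[OF this] show ?thesis
    by (simp add: case_prod_beta)
qed

lemma integrable_conv:
  fixes g h :: "real \<Rightarrow> complex"
  assumes "integrable lborel g" and "integrable lborel h"
  shows "integrable lborel (conv g h)"
  unfolding conv_def[abs_def]
  using lborel_pair.integrable_fst[of "\<lambda>x y. g (x - y) * h y"] integrable_conv_integrand[OF assms]
  by simp

lemma fourier_conv:
  fixes g h :: "real \<Rightarrow> complex"
  assumes g: "integrable lborel g" and h: "integrable lborel h"
  shows "fourier (conv g h) \<theta> = fourier g \<theta> * fourier h \<theta>"
proof -
  define e where "e = (\<lambda>x. iexp (\<theta> * x))"
  have e_add: "e x = e y * e (x - y)" for x y
    unfolding e_def by (simp add: exp_add[symmetric] algebra_simps)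
  have int: "integrable (lborel \<Otimes>\<^sub>M lborel) (\<lambda>(x,y). e x * (g (x - y) * h y))"
    by (rule Bochner_Integration.integrable_bound[OF integrable_conv_integrand[OF g h]])
      (use g h in \<open>auto simp: e_def norm_mult\<close>)
  have "fourier (conv g h) \<theta> = (LINT y|lborel. LINT x|lborel. e x * (g (x - y) * h y))"
    using lborel_pair.Fubini_integral[OF int] unfolding fourier_def conv_def e_def by simp
  also have "\<dots> = (LINT y|lborel. (e y * h y) * (LINT x|lborel. e (x - y) * g (x - y)))"
  proof (intro Bochner_Integration.integral_cong refl)
    fix y
    have split: "e x * (g (x - y) * h y) = (e y * h y) * (e (x - y) * g (x - y))" for x
      using e_add[of x y] by (simp add: ac_simps)
    show "(LINT x|lborel. e x * (g (x - y) * h y)) = (e y * h y) * (LINT x|lborel. e (x - y) * g (x - y))"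
      unfolding split by (rule integral_mult_right_zero)
  qed
  also have "\<dots> = (LINT y|lborel. (e y * h y) * fourier g \<theta>)"
    unfolding fourier_def e_def
    by (simp only: integral_translate[of "\<lambda>u. iexp (\<theta> * u) * g u"])
  also have "\<dots> = fourier h \<theta> * fourier g \<theta>"
    unfolding fourier_def[of h] e_def by (rule integral_mult_left_zero)
  finally show ?thesis by (simp only: mult.commute)
qed

lemma conv_pow_Suc: "k \<ge> 1 \<Longrightarrow> conv_pow f (Suc k) = conv (conv_pow f k) f"
  by (cases k) auto

lemma conv_pow_integrable_fourier:
  assumes f: "integrable lborel f" and k: "k \<ge> 1"
  shows "integrable lborel (conv_pow f k) \<and> (\<forall>\<theta>. fourier (conv_pow f k) \<theta> = fourier f \<theta> ^ k)"
  using k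
proof (induction rule: dec_induct)
  case base
  then show ?case using f by simp
next
  case (step k)
  then show ?case
    using integrable_conv[OF _ f, of "conv_pow f k"] fourier_conv[OF _ f, of "conv_pow f k"]
    by (simp add: conv_pow_Suc)
qed


section \<open>Gauss-Weierstrass smoothing\<close>

definition gauss_smooth :: "real \<Rightarrow> (real \<Rightarrow> complex) \<Rightarrow> real \<Rightarrow> complex" where
  "gauss_smooth s g x = (LINT y|lborel. g y * complex_of_real (gauss_kernel s (y - x)))"

lemma gauss_smooth_measurable [measurable]:
  assumes [measurable]: "g \<in> borel_measurable lborel"
  shows "gauss_smooth s g \<in> borel_measurable lborel"
  unfolding gauss_smooth_def[abs_def] by measurable

text \<open>Multiplication formula: the smoothing of g is the inverse transform of g^ damped by
  the Gaussian \<phi>(s\<theta>). This is the bridge between g and its transform.\<close>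
lemma gauss_smooth_eq_fourier:
  fixes g :: "real \<Rightarrow> complex"
  assumes g: "integrable lborel g" and s: "s > 0"
  shows "gauss_smooth s g x = (LINT \<theta>|lborel. fourier g \<theta>
           * (iexp (-(\<theta> * x)) * complex_of_real (std_normal_density (s*\<theta>))))"
proof -
  have [measurable]: "g \<in> borel_measurable lborel" using g by auto
  define w where "w = (\<lambda>\<theta>. iexp (-(\<theta> * x)) * complex_of_real (std_normal_density (s*\<theta>)))"
  define F where "F = (\<lambda>\<theta> y. iexp (\<theta> * y) * g y * w \<theta>)"
  have F_eq: "F \<theta> y = g y * (iexp (\<theta> * (y - x)) * complex_of_real (std_normal_density (s*\<theta>)))"
    for \<theta> y
  proof -
    have "iexp (\<theta> * y) * iexp (-(\<theta> * x)) = iexp (\<theta> * (y - x))"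
      by (simp add: exp_add[symmetric] algebra_simps)
    then show ?thesis
      unfolding F_def w_def by (metis (no_types, lifting) mult.assoc mult.left_commute)
  qed
  have int: "integrable (lborel \<Otimes>\<^sub>M lborel) (case_prod F)"
  proof (rule integrable_product_bound[where a="\<lambda>\<theta>. std_normal_density (s*\<theta>)" and b="\<lambda>y. norm (g y)"])
    show "case_prod F \<in> borel_measurable (lborel \<Otimes>\<^sub>M lborel)"
      unfolding F_def w_def by measurable
    show "integrable lborel (\<lambda>\<theta>. std_normal_density (s*\<theta>))"
      using integrable_std_normal_density_scaled[OF s] .
    show "integrable lborel (\<lambda>y. norm (g y))" using g by auto
    show "norm (case_prod F (\<theta>, y)) \<le> std_normal_density (s * \<theta>) * norm (g y)" for \<theta> y
      unfolding F_def w_def by (simp add: norm_mult)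
  qed
  have "(LINT \<theta>|lborel. fourier g \<theta> * w \<theta>) = (LINT \<theta>|lborel. LINT y|lborel. F \<theta> y)"
    unfolding fourier_def F_def by (simp add: integral_mult_left_zero)
  also have "\<dots> = (LINT y|lborel. LINT \<theta>|lborel. F \<theta> y)"
    using lborel_pair.Fubini_integral[OF int] by simp
  also have "\<dots> = gauss_smooth s g x"
    unfolding F_eq gauss_smooth_def
    by (simp only: integral_mult_right_zero fourier_std_normal_density_scaled[OF s])
  finally show ?thesis unfolding w_def by simp
qed

lemma norm_gauss_smooth_le_fourier:
  fixes g :: "real \<Rightarrow> complex"
  assumes g: "integrable lborel g" and F: "integrable lborel (fourier g)" and s: "s > 0"
  shows "norm (gauss_smooth s g x) \<le> (LINT \<theta>|lborel. norm (fourier g \<theta>))"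
proof -
  have [measurable]: "g \<in> borel_measurable lborel" using g by auto
  let ?f = "\<lambda>\<theta>. fourier g \<theta> * (iexp (-(\<theta> * x)) * complex_of_real (std_normal_density (s*\<theta>)))"
  have bound: "norm (?f \<theta>) \<le> norm (fourier g \<theta>)" for \<theta>
    using std_normal_density_le_1[of "s*\<theta>"] by (simp add: norm_mult mult_left_le)
  have "integrable lborel ?f"
    by (rule Bochner_Integration.integrable_bound[OF integrable_norm[OF F]])
      (use bound in auto)
  then have "norm (LINT \<theta>|lborel. ?f \<theta>) \<le> (LINT \<theta>|lborel. norm (fourier g \<theta>))"
    using F bound by (intro Bochner_Integration.integral_norm_bound_integral) auto
  then show ?thesis using gauss_smooth_eq_fourier[OF g s, of x] by simp
qed

lemma norm_gauss_smooth_le_bound: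
  fixes g :: "real \<Rightarrow> complex"
  assumes g: "integrable lborel g" and C: "AE y in lborel. norm (g y) \<le> C" and s: "s > 0"
  shows "norm (gauss_smooth s g x) \<le> C * sqrt (2*pi)"
proof -
  have [measurable]: "g \<in> borel_measurable lborel" using g by auto
  have G0: "0 \<le> gauss_kernel s z" for z using gauss_kernel_pos[OF s] by (simp add: less_imp_le)
  have "integrable lborel (\<lambda>y. norm (g y) * gauss_kernel s (y - x))"
  proof (rule Bochner_Integration.integrable_bound[OF integrable_mult_left[OF integrable_norm[OF g], of "1/s"]])
    show "(\<lambda>y. norm (g y) * gauss_kernel s (y - x)) \<in> borel_measurable lborel" by measurable
    show "AE y in lborel. norm (norm (g y) * gauss_kernel s (y - x)) \<le> norm (norm (g y) * (1/s))"
    proof (rule AE_I2)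
      fix y
      have "norm (g y) * gauss_kernel s (y - x) \<le> norm (g y) * (1/s)"
        by (rule mult_left_mono[OF gauss_kernel_le[OF s]]) simp
      then show "norm (norm (g y) * gauss_kernel s (y - x)) \<le> norm (norm (g y) * (1/s))"
        using G0[of "y - x"] s by simp
    qed
  qed
  then have "norm (gauss_smooth s g x) \<le> (LINT y|lborel. C * gauss_kernel s (y - x))"
    unfolding gauss_smooth_def
    by (intro order_trans[OF integral_norm_bound] integral_mono_AE)
      (use G0 C integrable_gauss_kernel[OF s] in \<open>auto simp: norm_mult elim!: eventually_mono intro: mult_right_mono\<close>)
  also have "\<dots> = C * sqrt (2*pi)"
    using integral_gauss_kernel[OF s] by simp
  finally show ?thesis .
qed


section \<open>Integrable transform implies essential boundedness\<close>

text \<open>The Gaussian mass of [a, b] seen from y: the smoothing of the indicator of [a, b].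
  As s \<rightarrow> 0 it tends to sqrt(2\<pi>) times the indicator, except at the end points.\<close>
definition interval_mass :: "real \<Rightarrow> real \<Rightarrow> real \<Rightarrow> real \<Rightarrow> real" where
  "interval_mass s a b y = (LINT x|lborel. indicator {a..b} x * gauss_kernel s (y - x))"

lemma interval_mass_measurable [measurable]: "interval_mass s a b \<in> borel_measurable lborel"
  unfolding interval_mass_def[abs_def] by measurable

lemma interval_mass_rescale:
  assumes s: "s > 0"
  shows "interval_mass s a b y = (LINT t|lborel. indicator {a..b} (y - s*t) * exp (-(t^2)/2))"
proof -
  have "interval_mass s a b y
      = \<bar>-s\<bar> *\<^sub>R (LINT t|lborel. indicator {a..b} (y + -s*t) * gauss_kernel s (y - (y + -s*t)))"
    unfolding interval_mass_def using s by (intro lborel_integral_real_affine) auto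
  also have "\<dots> = s * (LINT t|lborel. (1/s) * (indicator {a..b} (y - s*t) * exp (-(t^2)/2)))"
    using s by (auto simp: gauss_kernel_def intro!: Bochner_Integration.integral_cong)
  also have "\<dots> = (LINT t|lborel. indicator {a..b} (y - s*t) * exp (-(t^2)/2))"
    using s by simp
  finally show ?thesis .
qed

lemma interval_mass_bounds:
  assumes s: "s > 0"
  shows "0 \<le> interval_mass s a b y" and "interval_mass s a b y \<le> sqrt (2*pi)"
proof -
  show "0 \<le> interval_mass s a b y"
    unfolding interval_mass_def
    by (rule Bochner_Integration.integral_nonneg) (use gauss_kernel_pos[OF s] in \<open>simp add: less_imp_le\<close>)
  have "(LINT t|lborel. indicator {a..b} (y - s*t) * exp (-(t^2)/2)) \<le> (LINT t|lborel. exp (-(t^2)/2::real))"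
    by (rule integral_mono'[OF gaussian_integral(1)]) (auto simp: indicator_def)
  then show "interval_mass s a b y \<le> sqrt (2*pi)"
    using interval_mass_rescale[OF s] gaussian_integral(2) by simp
qed

text \<open>Pointwise limit as the width s = 1/(n+1) tends to 0, by dominated convergence after
  rescaling; this needs y to be off the end points, where the indicator is continuous.\<close>
lemma interval_mass_limit:
  fixes y a b :: real
  assumes "y \<noteq> a" "y \<noteq> b"
  shows "(\<lambda>n. interval_mass (1 / real (Suc n)) a b y) \<longlonglongrightarrow> indicator {a..b} y * sqrt (2*pi)"
proof -
  define e where "e = (\<lambda>t::real. exp (-(t^2)/2))"
  have [measurable]: "e \<in> borel_measurable borel" unfolding e_def by measurable
  have not_frontier: "y \<notin> frontier {a..b}"
    using assms by (auto simp: frontier_def interior_atLeastAtMost_real)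
  have width: "(\<lambda>n. 1 / real (Suc n)) \<longlonglongrightarrow> 0"
    using LIMSEQ_inverse_real_of_nat by (simp add: inverse_eq_divide)
  have shrink: "(\<lambda>n. y - (1 / real (Suc n)) * t) \<longlonglongrightarrow> y" for t
    using tendsto_diff[OF tendsto_const[of y] tendsto_mult_left_zero[OF width, of t]] by simp
  have lim: "(\<lambda>n. LINT t|lborel. indicator {a..b} (y - (1 / real (Suc n))*t) * e t)
      \<longlonglongrightarrow> (LINT t|lborel. indicator {a..b} y * e t)"
  proof (rule integral_dominated_convergence[where w="e"])
    show "integrable lborel e" using gaussian_integral(1) unfolding e_def .
    show "AE t in lborel. (\<lambda>n. indicator {a..b} (y - (1 / real (Suc n))*t) * e t)
        \<longlonglongrightarrow> indicator {a..b} y * e t"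
      using not_frontier
      by (intro AE_I2 tendsto_mult[OF _ tendsto_const] isCont_tendsto_compose[OF _ shrink])
        (simp add: isCont_indicator)
    show "AE t in lborel. norm (indicator {a..b} (y - (1 / real (Suc n))*t) * e t) \<le> e t" for n
      by (intro AE_I2) (simp add: e_def indicator_def)
  qed measurable
  have limit_value: "(LINT t|lborel. indicator {a..b} y * e t) = indicator {a..b} y * sqrt (2*pi)"
    using gaussian_integral(2) unfolding e_def by simp
  have rescaled: "(\<lambda>n. interval_mass (1 / real (Suc n)) a b y)
      = (\<lambda>n. LINT t|lborel. indicator {a..b} (y - (1 / real (Suc n))*t) * e t)"
    unfolding e_def by (intro ext interval_mass_rescale) simp
  show ?thesis
    using lim unfolding limit_value rescaled .
qed

lemma integral_interval_mass_eq:
  fixes g :: "real \<Rightarrow> complex"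
  assumes g: "integrable lborel g" and s: "s > 0"
  shows "(LINT y|lborel. g y * complex_of_real (interval_mass s a b y))
       = (LINT x|lborel. indicator {a..b} x *\<^sub>R gauss_smooth s g x)"
proof -
  have [measurable]: "g \<in> borel_measurable lborel" using g by auto
  define H where "H = (\<lambda>x y. indicator {a..b} x *\<^sub>R (g y * complex_of_real (gauss_kernel s (y - x))))"
  have H: "integrable (lborel \<Otimes>\<^sub>M lborel) (case_prod H)"
  proof (rule integrable_product_bound[where a="\<lambda>x. indicator {a..b} x * (1/s)" and b="\<lambda>y. norm (g y)"])
    show "case_prod H \<in> borel_measurable (lborel \<Otimes>\<^sub>M lborel)"
      unfolding H_def by measurable
    show "integrable lborel (\<lambda>x. indicator {a..b} x * (1/s))"
      by (intro integrable_mult_left integrable_real_indicator) (simp_all add: emeasure_lborel_Icc_eq)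
    show "integrable lborel (\<lambda>y. norm (g y))" using g by auto
    fix x y
    have "norm (g y) * gauss_kernel s (y - x) \<le> norm (g y) * (1/s)"
      by (rule mult_left_mono[OF gauss_kernel_le[OF s]]) simp
    then show "norm (case_prod H (x, y)) \<le> indicator {a..b} x * (1/s) * norm (g y)"
      unfolding H_def using gauss_kernel_pos[OF s, of "y - x"]
      by (auto simp: norm_mult indicator_def mult.commute)
  qed
  have "(LINT y|lborel. g y * complex_of_real (interval_mass s a b y)) = (LINT y|lborel. LINT x|lborel. H x y)"
    unfolding interval_mass_def H_def
    by (simp flip: integral_complex_of_real integral_mult_right_zero add: scaleR_conv_of_real ac_simps)
  also have "\<dots> = (LINT x|lborel. LINT y|lborel. H x y)"
    using lborel_pair.Fubini_integral[OF H] by simp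
  finally show ?thesis
    unfolding H_def gauss_smooth_def by simp
qed

lemma norm_integral_interval_mass_le:
  fixes g :: "real \<Rightarrow> complex"
  assumes g: "integrable lborel g" and F: "integrable lborel (fourier g)" and s: "s > 0" and ab: "a \<le> b"
  shows "norm (LINT y|lborel. g y * complex_of_real (interval_mass s a b y))
     \<le> (LINT \<theta>|lborel. norm (fourier g \<theta>)) * (b - a)"
proof -
  have [measurable]: "g \<in> borel_measurable lborel" using g by auto
  define M where "M = (LINT \<theta>|lborel. norm (fourier g \<theta>))"
  have bound: "norm (indicator {a..b} x *\<^sub>R gauss_smooth s g x) \<le> indicator {a..b} x * M" for x
    using norm_gauss_smooth_le_fourier[OF g F s, of x] unfolding M_def
    by (auto simp: indicator_def)
  have ind: "integrable lborel (\<lambda>x. indicator {a..b} x * M)"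
    using ab by (intro integrable_mult_left) simp
  have "norm (LINT x|lborel. indicator {a..b} x *\<^sub>R gauss_smooth s g x) \<le> (LINT x|lborel. indicator {a..b} x * M)"
  proof (rule Bochner_Integration.integral_norm_bound_integral[OF _ ind bound])
    show "integrable lborel (\<lambda>x. indicator {a..b} x *\<^sub>R gauss_smooth s g x)"
    proof (rule Bochner_Integration.integrable_bound[OF ind])
      show "AE x in lborel. norm (indicator {a..b} x *\<^sub>R gauss_smooth s g x) \<le> norm (indicator {a..b} x * M)"
        by (intro AE_I2 order_trans[OF bound]) (simp only: real_norm_def abs_ge_self)
    qed measurable
  qed
  also have "\<dots> = M * (b - a)"
    using ab by simp
  finally show ?thesis
    unfolding integral_interval_mass_eq[OF g s] M_def .
qed

lemma norm_interval_integral_le_fourier: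
  fixes g :: "real \<Rightarrow> complex"
  assumes g: "integrable lborel g" and F: "integrable lborel (fourier g)" and ab: "a \<le> b"
  shows "norm (LINT y|lborel. indicator {a..b} y *\<^sub>R g y)
     \<le> (LINT \<theta>|lborel. norm (fourier g \<theta>)) / sqrt (2*pi) * (b - a)"
proof -
  have [measurable]: "g \<in> borel_measurable lborel" using g by auto
  define M where "M = (LINT \<theta>|lborel. norm (fourier g \<theta>))"
  define P where "P = (\<lambda>n. interval_mass (1 / real (Suc n)) a b)"
  have s: "1 / real (Suc n) > 0" for n by simp
  have lim: "(\<lambda>n. LINT y|lborel. g y * complex_of_real (P n y))
      \<longlonglongrightarrow> (LINT y|lborel. g y * complex_of_real (indicator {a..b} y * sqrt (2*pi)))"
  proof (rule integral_dominated_convergence[where w="\<lambda>y. norm (g y) * sqrt (2*pi)"])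
    show "integrable lborel (\<lambda>y. norm (g y) * sqrt (2*pi))" using g by auto
    show "AE y in lborel. norm (g y * complex_of_real (P n y)) \<le> norm (g y) * sqrt (2*pi)" for n
      using interval_mass_bounds[OF s] unfolding P_def
      by (intro AE_I2) (simp add: norm_mult mult_left_mono)
    show "AE y in lborel. (\<lambda>n. g y * complex_of_real (P n y))
        \<longlonglongrightarrow> g y * complex_of_real (indicator {a..b} y * sqrt (2*pi))"
      using AE_lborel_singleton[of a] AE_lborel_singleton[of b]
      unfolding P_def
      by eventually_elim (intro tendsto_mult[OF tendsto_const] tendsto_of_real interval_mass_limit)
  qed (auto simp: P_def)
  have "norm (LINT y|lborel. g y * complex_of_real (indicator {a..b} y * sqrt (2*pi))) \<le> M * (b - a)"
    by (rule LIMSEQ_le_const2[OF tendsto_norm[OF lim]])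
      (use norm_integral_interval_mass_le[OF g F s ab] in \<open>auto simp: P_def M_def\<close>)
  moreover have "(LINT y|lborel. g y * complex_of_real (indicator {a..b} y * sqrt (2*pi)))
      = complex_of_real (sqrt (2*pi)) * (LINT y|lborel. indicator {a..b} y *\<^sub>R g y)"
    by (simp flip: integral_mult_right_zero add: scaleR_conv_of_real ac_simps)
  ultimately have "sqrt (2*pi) * norm (LINT y|lborel. indicator {a..b} y *\<^sub>R g y) \<le> M * (b - a)"
    by (simp add: norm_mult)
  then show ?thesis unfolding M_def[symmetric]
    by (simp add: field_simps)
qed

text \<open>Fact (A): an L^1 function with integrable transform is essentially bounded by
  \<parallel>g^\<parallel>_1/sqrt(2\<pi>). At every Lebesgue point, g is the limit of its interval averages.\<close>
lemma essentially_bounded_of_integrable_fourier: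
  fixes g :: "real \<Rightarrow> complex"
  assumes g: "integrable lborel g" and F: "integrable lborel (fourier g)"
  shows "AE x in lborel. norm (g x) \<le> (LINT \<theta>|lborel. norm (fourier g \<theta>)) / sqrt (2*pi)"
proof -
  define K where "K = (LINT \<theta>|lborel. norm (fourier g \<theta>)) / sqrt (2*pi)"
  have set_integrable: "set_integrable lborel {a..b} g" for a b :: real
    unfolding set_integrable_def using integrable_mult_indicator[OF _ g] by simp
  have interval_integral: "integral {a..b} g = (LINT y|lborel. indicator {a..b} y *\<^sub>R g y)" for a b :: real
    using set_borel_integral_eq_integral(2)[OF set_integrable] by (simp add: set_lebesgue_integral_def)
  have "g integrable_on cbox a b" for a b :: real
    using set_borel_integral_eq_integral(1)[OF set_integrable] by (simp add: cbox_interval)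
  then obtain N where N: "negligible N"
    and lebesgue_point: "\<And>x e. \<lbrakk>x \<notin> N; 0 < e\<rbrakk> \<Longrightarrow> \<exists>d>0. \<forall>h. 0 < h \<and> h < d \<longrightarrow>
                         norm (integral (cbox x (x + h *\<^sub>R One)) g /\<^sub>R h ^ DIM(real) - g x) < e"
    using integrable_ccontinuous_explicit[of g] by metis
  have "norm (g x) \<le> K" if x: "x \<notin> N" for x
  proof (rule ccontr)
    assume "\<not> norm (g x) \<le> K"
    then obtain d where d: "d > 0" and close: "\<And>h. 0 < h \<and> h < d \<Longrightarrow>
        norm (integral {x..x+h} g /\<^sub>R h - g x) < norm (g x) - K"
      using lebesgue_point[OF x, of "norm (g x) - K"] by (auto simp: cbox_interval)
    define h where "h = d/2"
    have h: "0 < h" "h < d" using d by (auto simp: h_def)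
    have "norm (integral {x..x+h} g) \<le> K * h"
      using norm_interval_integral_le_fourier[OF g F, of x "x+h"] h
      unfolding interval_integral K_def by simp
    then have "norm (integral {x..x+h} g /\<^sub>R h) \<le> K"
      using h by (simp add: field_simps)
    then have "norm (g x) - K \<le> norm (integral {x..x+h} g /\<^sub>R h - g x)"
      using norm_triangle_ineq3[of "g x" "integral {x..x+h} g /\<^sub>R h"]
      by (simp add: norm_minus_commute)
    then show False using close h by fastforce
  qed
  moreover have "AE x in lborel. x \<notin> N"
    using N AE_not_in[of N lebesgue] by (simp add: negligible_iff_null_sets AE_completion_iff)
  ultimately show ?thesis
    unfolding K_def by (auto elim: eventually_mono)
qed


section \<open>Bounded integrable functions have square-integrable transform\<close>

text \<open>Since |g^| \<le> \<parallel>g\<parallel>_1, the Gaussian-weighted energy of g^ is finite.\<close>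
lemma integrable_weighted_fourier_energy:
  fixes h :: "real \<Rightarrow> complex"
  assumes h: "integrable lborel h" and s: "s > 0"
  shows "integrable lborel (\<lambda>\<theta>. norm (fourier h \<theta>)^2 * std_normal_density (s*\<theta>))"
proof (rule Bochner_Integration.integrable_bound
    [OF integrable_mult_left[OF integrable_std_normal_density_scaled[OF s]]])
  have [measurable]: "h \<in> borel_measurable lborel" using h by auto
  show "(\<lambda>\<theta>. norm (fourier h \<theta>)^2 * std_normal_density (s*\<theta>)) \<in> borel_measurable lborel"
    by measurable
  show "AE \<theta> in lborel. norm (norm (fourier h \<theta>)^2 * std_normal_density (s*\<theta>))
      \<le> norm (std_normal_density (s*\<theta>) * (LINT x|lborel. norm (h x))^2)"
  proof (rule AE_I2)
    fix \<theta>
    have "norm (fourier h \<theta>)^2 \<le> (LINT x|lborel. norm (h x))^2"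
      using norm_fourier_le[OF h, of \<theta>] by (simp add: power_mono)
    then have "norm (fourier h \<theta>)^2 * std_normal_density (s*\<theta>)
        \<le> (LINT x|lborel. norm (h x))^2 * std_normal_density (s*\<theta>)"
      by (rule mult_right_mono) simp
    then show "norm (norm (fourier h \<theta>)^2 * std_normal_density (s*\<theta>))
        \<le> norm (std_normal_density (s*\<theta>) * (LINT x|lborel. norm (h x))^2)"
      by (simp add: ac_simps)
  qed
qed

text \<open>Pairing identity (Fubini and the multiplication formula): the Gaussian-weighted
  energy of h^ equals the pairing of h with its smoothing.\<close>
lemma weighted_fourier_energy_eq:
  fixes h :: "real \<Rightarrow> complex"
  assumes h: "integrable lborel h" and s: "s > 0"
  shows "complex_of_real (LINT \<theta>|lborel. norm (fourier h \<theta>)^2 * std_normal_density (s*\<theta>))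
       = (LINT x|lborel. h x * cnj (gauss_smooth s h x))"
proof -
  have [measurable]: "h \<in> borel_measurable lborel" using h by auto
  define B where "B = (LINT x|lborel. norm (h x))"
  define E where "E = (\<lambda>\<theta> x. iexp (\<theta> * x) * h x
                         * (cnj (fourier h \<theta>) * complex_of_real (std_normal_density (s*\<theta>))))"
  have E: "integrable (lborel \<Otimes>\<^sub>M lborel) (case_prod E)"
  proof (rule integrable_product_bound[where a="\<lambda>\<theta>. B * std_normal_density (s*\<theta>)" and b="\<lambda>x. norm (h x)"])
    show "case_prod E \<in> borel_measurable (lborel \<Otimes>\<^sub>M lborel)"
      unfolding E_def by measurable
    show "integrable lborel (\<lambda>\<theta>. B * std_normal_density (s*\<theta>))"
      using integrable_std_normal_density_scaled[OF s] by simp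
    show "integrable lborel (\<lambda>x. norm (h x))" using h by auto
    fix \<theta> x
    have "norm (fourier h \<theta>) * std_normal_density (s*\<theta>) \<le> B * std_normal_density (s*\<theta>)"
      unfolding B_def by (intro mult_right_mono norm_fourier_le[OF h]) simp
    then have "norm (h x) * (norm (fourier h \<theta>) * std_normal_density (s*\<theta>))
        \<le> norm (h x) * (B * std_normal_density (s*\<theta>))"
      by (rule mult_left_mono) simp
    then show "norm (case_prod E (\<theta>, x)) \<le> B * std_normal_density (s*\<theta>) * norm (h x)"
      unfolding E_def by (simp add: norm_mult ac_simps)
  qed
  have "complex_of_real (LINT \<theta>|lborel. norm (fourier h \<theta>)^2 * std_normal_density (s*\<theta>))
      = (LINT \<theta>|lborel. fourier h \<theta> * (cnj (fourier h \<theta>) * complex_of_real (std_normal_density (s*\<theta>))))"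
    unfolding integral_complex_of_real[symmetric]
    by (intro Bochner_Integration.integral_cong refl) (simp only: of_real_mult complex_norm_square mult.assoc)
  also have "\<dots> = (LINT \<theta>|lborel. LINT x|lborel. E \<theta> x)"
    unfolding fourier_def E_def by (simp add: integral_mult_left_zero)
  also have "\<dots> = (LINT x|lborel. LINT \<theta>|lborel. E \<theta> x)"
    using lborel_pair.Fubini_integral[OF E] by simp
  also have "\<dots> = (LINT x|lborel. h x * cnj (gauss_smooth s h x))"
  proof (intro Bochner_Integration.integral_cong refl)
    fix x
    have "(LINT \<theta>|lborel. E \<theta> x) = (LINT \<theta>|lborel. h x * cnj (fourier h \<theta>
          * (iexp (-(\<theta> * x)) * complex_of_real (std_normal_density (s*\<theta>)))))"
      unfolding E_def by (intro Bochner_Integration.integral_cong refl) (simp add: exp_cnj ac_simps)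
    then show "(LINT \<theta>|lborel. E \<theta> x) = h x * cnj (gauss_smooth s h x)"
      by (simp only: integral_mult_right_zero Bochner_Integration.integral_cnj gauss_smooth_eq_fourier[OF h s])
  qed
  finally show ?thesis .
qed

text \<open>Weighted Plancherel-type bound: if |h| \<le> C a.e., the smoothings of h are bounded by
  C sqrt(2\<pi>), so the pairing gives \<integral> |h^|^2 \<phi>(s\<theta>) d\<theta> \<le> C sqrt(2\<pi>) \<parallel>h\<parallel>_1, uniformly in s.\<close>
lemma weighted_fourier_energy_le:
  fixes h :: "real \<Rightarrow> complex"
  assumes h: "integrable lborel h" and C: "AE x in lborel. norm (h x) \<le> C" and s: "s > 0"
  shows "(LINT \<theta>|lborel. norm (fourier h \<theta>)^2 * std_normal_density (s*\<theta>))
     \<le> C * sqrt (2*pi) * (LINT x|lborel. norm (h x))"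
proof -
  have [measurable]: "h \<in> borel_measurable lborel" using h by auto
  have pointwise: "norm (h x * cnj (gauss_smooth s h x)) \<le> norm (h x) * (C * sqrt (2*pi))" for x
    using mult_left_mono[OF norm_gauss_smooth_le_bound[OF h C s, of x] norm_ge_zero[of "h x"]]
    by (simp add: norm_mult)
  have "integrable lborel (\<lambda>x. h x * cnj (gauss_smooth s h x))"
    by (rule Bochner_Integration.integrable_bound
        [OF integrable_mult_left[OF integrable_norm[OF h], of "C * sqrt (2*pi)"]])
      (auto intro!: AE_I2 order_trans[OF pointwise])
  then have "norm (LINT x|lborel. h x * cnj (gauss_smooth s h x))
      \<le> (LINT x|lborel. norm (h x) * (C * sqrt (2*pi)))"
    using h pointwise by (intro Bochner_Integration.integral_norm_bound_integral) auto
  then have "norm (complex_of_real (LINT \<theta>|lborel. norm (fourier h \<theta>)^2 * std_normal_density (s*\<theta>)))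
      \<le> (LINT x|lborel. norm (h x) * (C * sqrt (2*pi)))"
    unfolding weighted_fourier_energy_eq[OF h s] .
  then show ?thesis by (simp add: ac_simps)
qed

text \<open>Fact (B): letting s \<rightarrow> 0 in the weighted bound (Fatou's lemma), the transform of a
  bounded L^1 function is square integrable.\<close>
lemma square_integrable_fourier:
  fixes h :: "real \<Rightarrow> complex"
  assumes h: "integrable lborel h" and C: "AE x in lborel. norm (h x) \<le> C"
  shows "integrable lborel (\<lambda>\<theta>. norm (fourier h \<theta>)^2)"
proof -
  have [measurable]: "h \<in> borel_measurable lborel" using h by auto
  define L where "L = sqrt (2*pi) * (C * sqrt (2*pi) * (LINT x|lborel. norm (h x)))"
  define u where "u = (\<lambda>n \<theta>. ennreal (sqrt (2*pi) * (norm (fourier h \<theta>)^2 * std_normal_density ((1 / real (Suc n)) * \<theta>))))"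
  have [measurable]: "u n \<in> borel_measurable lborel" for n unfolding u_def by measurable
  have lim: "(\<lambda>n. u n \<theta>) \<longlonglongrightarrow> ennreal (norm (fourier h \<theta>)^2)" for \<theta>
  proof -
    have "(\<lambda>n. (1 / real (Suc n)) * \<theta>) \<longlonglongrightarrow> 0"
      using tendsto_mult_left_zero[OF LIMSEQ_inverse_real_of_nat, of \<theta>] by (simp add: inverse_eq_divide)
    then have "(\<lambda>n. std_normal_density ((1 / real (Suc n)) * \<theta>)) \<longlonglongrightarrow> std_normal_density 0"
      unfolding std_normal_density_def by (intro tendsto_intros) simp_all
    moreover have "sqrt (2*pi) * std_normal_density 0 = 1"
      by (simp add: std_normal_density_def)
    ultimately show ?thesis
      unfolding u_def by (intro tendsto_ennrealI) (auto intro!: tendsto_eq_intros)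
  qed
  have bounded: "integral\<^sup>N lborel (u n) \<le> ennreal L" for n
  proof -
    have s: "1 / real (Suc n) > 0" by simp
    have "integral\<^sup>N lborel (u n)
        = ennreal (sqrt (2*pi) * (LINT \<theta>|lborel. norm (fourier h \<theta>)^2 * std_normal_density ((1 / real (Suc n)) * \<theta>)))"
      unfolding u_def
      using nn_integral_eq_integral[OF integrable_mult_right[OF integrable_weighted_fourier_energy[OF h s]]]
      by simp
    also have "\<dots> \<le> L"
      unfolding L_def by (intro ennreal_leI mult_left_mono weighted_fourier_energy_le[OF h C s]) simp
    finally show ?thesis .
  qed
  have "(\<integral>\<^sup>+\<theta>. ennreal (norm (fourier h \<theta>)^2) \<partial>lborel) = (\<integral>\<^sup>+\<theta>. liminf (\<lambda>n. u n \<theta>) \<partial>lborel)"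
    by (intro nn_integral_cong) (simp add: lim_imp_Liminf[OF _ lim])
  also have "\<dots> \<le> liminf (\<lambda>n. integral\<^sup>N lborel (u n))"
    by (rule nn_integral_liminf) simp
  also have "\<dots> \<le> liminf (\<lambda>n. ennreal L)"
    using bounded by (intro Liminf_mono) auto
  also have "\<dots> = ennreal L"
    by (simp add: Liminf_const)
  finally show ?thesis
    by (intro integrableI_bounded) (auto simp: le_less_trans)
qed


lemma power_le_powr_interpolate:
  fixes r B p :: real
  assumes r: "0 \<le> r" "r \<le> B" and p: "0 < p" "p \<le> real k"
  shows "r ^ k \<le> B powr (real k - p) * r powr p"
proof (cases "r = 0")
  case True
  moreover have "k \<noteq> 0" using p by auto
  ultimately show ?thesis by (simp add: power_0_left)
next
  case False
  then have "r ^ k = r powr (real k - p) * r powr p"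
    using r by (simp add: powr_realpow powr_add[symmetric])
  also have "\<dots> \<le> B powr (real k - p) * r powr p"
    by (intro mult_right_mono powr_mono2) (use r p in auto)
  finally show ?thesis .
qed

text \<open>Forward direction: if f_k \<in> L^\<infinity>, then by (B) the function |(f_k)^|^2 = |f^|^{2k} is
  integrable, i.e. f^ \<in> L^{2k}.\<close>
lemma fourier_in_Lp_of_conv_pow_in_Linf:
  fixes f :: "real \<Rightarrow> complex"
  assumes f: "integrable lborel f" and k: "k \<ge> 1" and bounded: "in_Linf (conv_pow f k)"
  shows "in_Lp (real (2 * k)) (fourier f)"
proof -
  have [measurable]: "f \<in> borel_measurable lborel" using f by auto
  have int_k: "integrable lborel (conv_pow f k)"
    and hat_k: "\<And>\<theta>. fourier (conv_pow f k) \<theta> = fourier f \<theta> ^ k"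
    using conv_pow_integrable_fourier[OF f k] by auto
  obtain C where "AE x in lborel. norm (conv_pow f k x) \<le> C"
    using bounded unfolding in_Linf_def by blast
  from square_integrable_fourier[OF int_k this]
  have "integrable lborel (\<lambda>\<theta>. norm (fourier (conv_pow f k) \<theta>)^2)" .
  moreover have "norm (fourier (conv_pow f k) \<theta>)^2 = norm (fourier f \<theta>) powr real (2 * k)" for \<theta>
  proof -
    have "norm (fourier (conv_pow f k) \<theta>)^2 = norm (fourier f \<theta>) ^ (2 * k)"
      by (simp add: hat_k norm_power power_mult[symmetric] mult.commute)
    also have "\<dots> = norm (fourier f \<theta>) powr real (2 * k)"
      by (rule powr_realpow'[symmetric]) (use k in auto)
    finally show ?thesis .
  qed
  ultimately show ?thesis
    unfolding in_Lp_def by simp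
qed

text \<open>Since |f^| \<le> \<parallel>f\<parallel>_1, the function
  |(f_k)^| = |f^|^k \<le> \<parallel>f\<parallel>_1^{k-p} |f^|^p is integrable, so f_k \<in> L^\<infinity> by (A).\<close>
lemma conv_pow_in_Linf_of_fourier_in_Lp:
  fixes f :: "real \<Rightarrow> complex"
  assumes f: "integrable lborel f" and p: "1 \<le> p" and Lp: "in_Lp p (fourier f)"
  shows "in_Linf (conv_pow f (nat \<lceil>p\<rceil>))"
proof -
  define k where "k = nat \<lceil>p\<rceil>"
  have pk: "p \<le> real k" and k: "k \<ge> 1" using p unfolding k_def by linarith+
  have int_k: "integrable lborel (conv_pow f k)"
    and hat_k: "\<And>\<theta>. fourier (conv_pow f k) \<theta> = fourier f \<theta> ^ k"
    using conv_pow_integrable_fourier[OF f k] by auto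
  have [measurable]: "conv_pow f k \<in> borel_measurable lborel" using int_k by auto
  have "integrable lborel (fourier (conv_pow f k))"
  proof (rule Bochner_Integration.integrable_bound)
    show "integrable lborel (\<lambda>\<theta>. (LINT x|lborel. norm (f x)) powr (real k - p) * norm (fourier f \<theta>) powr p)"
      using Lp unfolding in_Lp_def by (intro integrable_mult_right) simp
    show "AE \<theta> in lborel. norm (fourier (conv_pow f k) \<theta>)
        \<le> norm ((LINT x|lborel. norm (f x)) powr (real k - p) * norm (fourier f \<theta>) powr p)"
      using norm_fourier_le[OF f] p pk
      by (intro AE_I2) (simp add: hat_k norm_power power_le_powr_interpolate)
  qed measurable
  from essentially_bounded_of_integrable_fourier[OF int_k this]
  have "in_Linf (conv_pow f k)"
    unfolding in_Linf_def by auto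
  then show ?thesis unfolding k_def .
qed

theorem lemma1p2:
  fixes f :: "real \<Rightarrow> complex"
  assumes "integrable lborel f"
  shows "(\<exists>k0::nat. k0 \<ge> 1 \<and> in_Linf (conv_pow f k0)) \<longleftrightarrow>
         (\<exists>p::real. 1 \<le> p \<and> in_Lp p (fourier f))"
proof
  assume "\<exists>k0::nat. k0 \<ge> 1 \<and> in_Linf (conv_pow f k0)"
  then obtain k where "k \<ge> 1" and "in_Linf (conv_pow f k)" by blast
  with fourier_in_Lp_of_conv_pow_in_Linf[OF assms]
  show "\<exists>p::real. 1 \<le> p \<and> in_Lp p (fourier f)"
    by (intro exI[of _ "real (2 * k)"]) simp
next
  assume "\<exists>p::real. 1 \<le> p \<and> in_Lp p (fourier f)"
  then obtain p where p: "1 \<le> p" and "in_Lp p (fourier f)" by blast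
  moreover have "nat \<lceil>p\<rceil> \<ge> 1" using p by linarith
  ultimately show "\<exists>k0::nat. k0 \<ge> 1 \<and> in_Linf (conv_pow f k0)"
    using conv_pow_in_Linf_of_fourier_in_Lp[OF assms] by blast
qed

end
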